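(* Let $n\ge 1$ and let $\|\cdot\|_L$ be one of the vectorized norms $L_1,L_2,L_\infty$ on $\mathbb{R}^{n\times n}$. Let $M\subset\mathbb{R}^{n\times n}$ be a set containing an open ball $B(a,c)$ whose radius $c$ is large enough that $B(a,c)$ contains a singular matrix of rank $n-1$, and let $S_M$ be the set of singular matrices in $M$. Let $F:\mathbb{R}^{n\times n}\to\mathbb{R}^{n\times n}$ be any polynomial Lipschitz continuous function. Then for every $k>0$ and every $E>0$ there exists a measurable subset $M_\epsilon\subset M\setminus S_M$ of positive finite Lebesgue measure such that $$\mathbb{E}_{x\sim M_\epsilon}\big[\|\mathrm{Inv}(x)-F(x)\|_L^k\big]>E,$$ where the expectation is with respect to the uniform (normalized Lebesgue) distribution on $M_\epsilon$.
   Context: $\mathrm{Inv}(x)=x^{-1}$ denotes matrix inversion, defined on invertible matrices. For $A=(a_{ij})\in\mathbb{R}^{n\times n}$ the norms are vectorized: $\|A\|_{L_1}=\sum_{i,j}|a_{ij}|$, $\|A\|_{L_2}=(\sum_{i,j}|a_{ij}|^2)^{1/2}$, $\|A\|_{L_\infty}=\max_{i,j}|a_{ij}|$; $\mathbb{R}^{n\times n}$ is identified with $\mathbb{R}^{n^2}$ with Lebesgue measure $m$. For a set $S$ of finite positive measure, $\mathbb{E}_{x\sim S}[g(x)]=\frac{1}{m(S)}\int_S g\,dm$. A function $f:\mathbb{R}^{n_1}\to\mathbb{R}^{n_2}$ is called polynomial Lipschitz continuous with respect to norms $\|\cdot\|_{L^+}$, $\|\cdot\|_{L^*}$ (chosen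 among $L_1,L_2,L_\infty$) if there exist a nonnegative integer $N$ and real polynomials $f_0,\dots,f_N$ in two variables such that for all $x,y$, $\|f(x)-f(y)\|_{L^*}\le \sum_{i=0}^{N} f_i(\|x\|_{L^+},\|y\|_{L^+})\|x-y\|_{L^+}^{i}$. *)

theory Defs
  imports "HOL-Analysis.Analysis"
begin

datatype Lnorm = L1 | L2 | Linf

definition vnorm :: "Lnorm \<Rightarrow> real^'n^'m \<Rightarrow> real" where
  "vnorm L A = (case L of
      L1 \<Rightarrow> (\<Sum>i\<in>UNIV. \<Sum>j\<in>UNIV. \<bar>A $ i $ j\<bar>)
    | L2 \<Rightarrow> sqrt (\<Sum>i\<in>UNIV. \<Sum>j\<in>UNIV. (A $ i $ j)^2)
    | Linf \<Rightarrow> (MAX i\<in>UNIV. MAX j\<in>UNIV. \<bar>A $ i $ j\<bar>))"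

definition poly2 :: "(nat \<Rightarrow> nat \<Rightarrow> real) \<Rightarrow> nat \<Rightarrow> real \<Rightarrow> real \<Rightarrow> real" where
  "poly2 c d s t = (\<Sum>i\<le>d. \<Sum>j\<le>d. c i j * s ^ i * t ^ j)"

definition poly_lipschitz :: "Lnorm \<Rightarrow> Lnorm \<Rightarrow> (real^'n^'m \<Rightarrow> real^'p^'q) \<Rightarrow> bool" where
  "poly_lipschitz Lp Ls f \<longleftrightarrow>
     (\<exists>(N::nat) (c::nat \<Rightarrow> nat \<Rightarrow> nat \<Rightarrow> real) (d::nat). \<forall>x y.
        vnorm Ls (f x - f y) \<le>
          (\<Sum>i\<le>N. poly2 (c i) d (vnorm Lp x) (vnorm Lp y) * vnorm Lp (x - y) ^ i))"

end

theory Submission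
  imports Defs "HOL-Computational_Algebra.Polynomial"
begin

(* A singular matrix x0 in the ball has a kernel vector v, and v = y^-1 (y - x0) v for every
   invertible y; hence |y^-1| >= 1 / |y - x0| blows up as y -> x0. A polynomially Lipschitz F is
   bounded on bounded sets, so |Inv y - F y| -> infinity too, in each vectorized norm since all of
   them are equivalent to the Euclidean one. Invertible matrices form a dense open set, so close to
   x0 there is a small ball of invertible matrices inside M on which |Inv - F|^k exceeds E + 1
   pointwise, and the average over that ball then exceeds E. *)

lemma vnorm_L2_eq_norm: "vnorm L2 (A::real^'n^'m) = norm A"
proof -
  have "\<And>i. (norm (A $ i))\<^sup>2 = (\<Sum>j\<in>UNIV. (A $ i $ j)\<^sup>2)"
    by (simp add: norm_vec_def L2_set_def sum_nonneg)
  then show ?thesis by (simp add: vnorm_def norm_vec_def L2_set_def)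
qed

lemma abs_entry_le_norm: "\<bar>(A::real^'n^'m) $ i $ j\<bar> \<le> norm A"
proof -
  have "\<bar>A $ i $ j\<bar> \<le> norm (A $ i)" by (rule component_le_norm_cart)
  also have "\<dots> \<le> norm A" unfolding norm_vec_def[of A] by (rule member_le_L2_set) auto
  finally show ?thesis .
qed

lemma abs_entry_le_vnorm_Linf: "\<bar>(A::real^'n^'m) $ i $ j\<bar> \<le> vnorm Linf A"
proof -
  have "\<bar>A $ i $ j\<bar> \<le> (MAX j\<in>UNIV. \<bar>A $ i $ j\<bar>)" by (rule Max_ge) auto
  also have "\<dots> \<le> (MAX i\<in>UNIV. MAX j\<in>UNIV. \<bar>A $ i $ j\<bar>)" by (rule Max_ge) auto
  finally show ?thesis by (simp add: vnorm_def)
qed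

lemma abs_entry_le_vnorm_L1: "\<bar>(A::real^'n^'m) $ i $ j\<bar> \<le> vnorm L1 A"
proof -
  have "\<bar>A $ i $ j\<bar> \<le> (\<Sum>j\<in>UNIV. \<bar>A $ i $ j\<bar>)" by (rule member_le_sum) auto
  also have "\<dots> \<le> (\<Sum>i\<in>UNIV. \<Sum>j\<in>UNIV. \<bar>A $ i $ j\<bar>)"
    by (rule member_le_sum) (auto intro: sum_nonneg)
  finally show ?thesis by (simp add: vnorm_def)
qed

lemma vnorm_L1_le_entry_bound:
  assumes "\<And>i j. \<bar>(A::real^'n^'m) $ i $ j\<bar> \<le> B"
  shows "vnorm L1 A \<le> real CARD('m) * real CARD('n) * B"
proof -
  have "(\<Sum>i\<in>UNIV. \<Sum>j\<in>UNIV. \<bar>A $ i $ j\<bar>) \<le> (\<Sum>i\<in>(UNIV::'m set). \<Sum>j\<in>(UNIV::'n set). B)"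
    by (intro sum_mono assms)
  then show ?thesis by (simp add: vnorm_def)
qed

lemma norm_le_vnorm_L1: "norm (A::real^'n^'m) \<le> vnorm L1 A"
proof -
  have "norm A \<le> (\<Sum>i\<in>UNIV. norm (A $ i))"
    unfolding norm_vec_def by (rule L2_set_le_sum) auto
  also have "\<dots> \<le> (\<Sum>i\<in>UNIV. \<Sum>j\<in>UNIV. \<bar>A $ i $ j\<bar>)"
    by (intro sum_mono norm_le_l1_cart)
  finally show ?thesis by (simp add: vnorm_def)
qed

lemma vnorm_nonneg: "0 \<le> vnorm L (A::real^'n^'m)"
proof (cases L)
  case Linf
  then show ?thesis using order_trans[OF abs_ge_zero abs_entry_le_vnorm_Linf] by blast
qed (auto simp: vnorm_def intro!: sum_nonneg)

lemma vnorm_le_vnorm_L1: "vnorm L (A::real^'n^'m) \<le> vnorm L1 A"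
proof (cases L)
  case L2
  then show ?thesis by (simp add: vnorm_L2_eq_norm norm_le_vnorm_L1)
next
  case Linf
  then show ?thesis by (simp add: vnorm_def[of Linf] abs_entry_le_vnorm_L1)
qed simp

lemma vnorm_L1_le_vnorm: "vnorm L1 (A::real^'n^'m) \<le> real CARD('m) * real CARD('n) * vnorm L A"
proof (cases L)
  case L1
  have "1 \<le> CARD('m) * CARD('n)"
    by (simp add: Suc_le_eq)
  then have "1 \<le> real CARD('m) * real CARD('n)"
    by (metis of_nat_1 of_nat_le_iff of_nat_mult)
  then show ?thesis
    using L1 vnorm_nonneg[of L1 A] by (simp add: mult_le_cancel_right1)
next
  case L2
  then show ?thesis
    by (simp add: vnorm_L1_le_entry_bound abs_entry_le_norm vnorm_L2_eq_norm)
next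
  case Linf
  then show ?thesis by (simp add: vnorm_L1_le_entry_bound abs_entry_le_vnorm_Linf)
qed

lemma vnorm_le_norm: "vnorm L (A::real^'n^'m) \<le> real CARD('m) * real CARD('n) * norm A"
  using vnorm_le_vnorm_L1[of L A] vnorm_L1_le_entry_bound[of A "norm A"] abs_entry_le_norm[of A]
  by fastforce

lemma norm_le_vnorm: "norm (A::real^'n^'m) \<le> real CARD('m) * real CARD('n) * vnorm L A"
  using norm_le_vnorm_L1[of A] vnorm_L1_le_vnorm[of A L] by linarith

lemma vnorm_triangle: "vnorm L ((A::real^'n^'m) + B) \<le> vnorm L A + vnorm L B"
proof (cases L)
  case L1
  have "(\<Sum>i\<in>UNIV. \<Sum>j\<in>UNIV. \<bar>(A + B) $ i $ j\<bar>)
      \<le> (\<Sum>i\<in>UNIV. \<Sum>j\<in>UNIV. \<bar>A $ i $ j\<bar> + \<bar>B $ i $ j\<bar>)"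
    by (intro sum_mono) (simp add: abs_triangle_ineq)
  then show ?thesis using L1 by (simp add: vnorm_def sum.distrib)
next
  case L2
  then show ?thesis by (simp add: vnorm_L2_eq_norm norm_triangle_ineq)
next
  case Linf
  have "\<bar>(A + B) $ i $ j\<bar> \<le> vnorm Linf A + vnorm Linf B" for i j
    using abs_entry_le_vnorm_Linf[of A i j] abs_entry_le_vnorm_Linf[of B i j]
      abs_triangle_ineq[of "A $ i $ j" "B $ i $ j"] by simp
  then show ?thesis using Linf by (simp add: vnorm_def)
qed

lemma lipschitz_on_vnorm:
  "(real CARD('m) * real CARD('n))-lipschitz_on UNIV (vnorm L :: real^'n^'m \<Rightarrow> real)"
proof (rule lipschitz_onI)
  fix A B :: "real^'n^'m"
  have "vnorm L A \<le> vnorm L B + real CARD('m) * real CARD('n) * dist A B"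
    using vnorm_triangle[of L B "A - B"] vnorm_le_norm[of L "A - B"] by (simp add: dist_norm)
  moreover have "vnorm L B \<le> vnorm L A + real CARD('m) * real CARD('n) * dist A B"
    using vnorm_triangle[of L A "B - A"] vnorm_le_norm[of L "B - A"]
    by (simp add: dist_norm norm_minus_commute)
  ultimately show "dist (vnorm L A) (vnorm L B) \<le> real CARD('m) * real CARD('n) * dist A B"
    by (simp add: dist_real_def)
qed simp

lemma open_vnorm_ball: "open {x::real^'n^'m. vnorm L (x - a) < c}"
proof -
  have "continuous_on UNIV (vnorm L :: real^'n^'m \<Rightarrow> real)"
    by (rule lipschitz_on_continuous_on[OF lipschitz_on_vnorm])
  then have "continuous_on UNIV (\<lambda>x::real^'n^'m. vnorm L (x - a))"
    by (rule continuous_on_compose2) (intro continuous_on_diff continuous_on_id continuous_on_const, simp)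
  then show ?thesis by (rule open_Collect_less[OF _ continuous_on_const])
qed

lemma filterlim_vnorm_at_top:
  fixes f :: "'a \<Rightarrow> real^'n^'m"
  assumes "filterlim (\<lambda>x. norm (f x)) at_top F"
  shows "filterlim (\<lambda>x. vnorm L (f x)) at_top F"
proof (rule filterlim_at_top_mono)
  define K where "K = real CARD('m) * real CARD('n)"
  have "0 < K"
    by (simp add: K_def)
  show "filterlim (\<lambda>x. inverse K * norm (f x)) at_top F"
    using \<open>0 < K\<close> by (intro filterlim_tendsto_pos_mult_at_top[OF tendsto_const _ assms]) simp
  show "\<forall>\<^sub>F x in F. inverse K * norm (f x) \<le> vnorm L (f x)"
    using \<open>0 < K\<close> norm_le_vnorm[of "f _" L] by (simp add: K_def field_simps)
qed

lemma norm_matrix_vector_mult_le: "norm ((A::real^'n^'m) *v x) \<le> norm A * norm x"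
proof -
  have "((A *v x) $ i)\<^sup>2 \<le> (norm (A $ i))\<^sup>2 * (norm x)\<^sup>2" for i
    using Cauchy_Schwarz_ineq2[of "A $ i" x] abs_le_square_iff[of "(A *v x) $ i" "norm (A $ i) * norm x"]
    by (simp add: matrix_vector_mult_def inner_vec_def power_mult_distrib)
  then have "(\<Sum>i\<in>UNIV. ((A *v x) $ i)\<^sup>2) \<le> (\<Sum>i\<in>UNIV. (norm (A $ i))\<^sup>2 * (norm x)\<^sup>2)"
    by (rule sum_mono)
  then have "(norm (A *v x))\<^sup>2 \<le> (norm A * norm x)\<^sup>2"
    by (simp add: norm_vec_def L2_set_def sum_nonneg power_mult_distrib sum_distrib_right)
  then show ?thesis by (rule power2_le_imp_le) simp
qed

lemma matrix_inv_left: "invertible A \<Longrightarrow> matrix_inv A ** A = mat 1"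
  unfolding invertible_def matrix_inv_def by (rule someI2_ex) auto

lemma norm_matrix_inv_mult_dist_singular_ge:
  fixes x0 y :: "real^'n^'n"
  assumes "det x0 = 0" and "invertible y"
  shows "1 \<le> norm (matrix_inv y) * dist y x0"
proof -
  obtain v where v: "v \<noteq> 0" "x0 *v v = 0"
    using assms(1) det_eq_0_rank matrix_nonfull_linear_equations_eq by (metis less_irrefl)
  have "v = matrix_inv y *v ((y - x0) *v v)"
    using v matrix_inv_left[OF assms(2)]
    by (simp add: matrix_vector_mul_assoc matrix_vector_mult_diff_rdistrib)
  then have "norm v \<le> norm (matrix_inv y) * norm ((y - x0) *v v)"
    by (metis norm_matrix_vector_mult_le)
  also have "\<dots> \<le> norm (matrix_inv y) * (norm (y - x0) * norm v)"
    by (intro mult_left_mono norm_matrix_vector_mult_le norm_ge_zero)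
  finally have "1 * norm v \<le> (norm (matrix_inv y) * dist y x0) * norm v"
    by (simp add: dist_norm mult.assoc)
  then show ?thesis
    using v by (simp add: mult_le_cancel_right)
qed

lemma filterlim_norm_matrix_inv_at_singular:
  fixes x0 :: "real^'n^'n"
  assumes "det x0 = 0"
  shows "filterlim (\<lambda>y. norm (matrix_inv y)) at_top (at x0 within {y. invertible y})"
  unfolding filterlim_at_top_gt[where c = 0]
proof (intro allI impI)
  fix Z :: real
  assume "Z > 0"
  have "Z < norm (matrix_inv y)" if "invertible y" "y \<noteq> x0" "dist y x0 < 1 / Z" for y
  proof -
    have "Z * dist y x0 < 1"
      using that(3) \<open>Z > 0\<close> by (simp add: field_simps)
    also have "\<dots> \<le> norm (matrix_inv y) * dist y x0"
      using norm_matrix_inv_mult_dist_singular_ge[OF assms that(1)] .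
    finally show ?thesis
      using that(2) by (simp add: mult_less_cancel_right)
  qed
  then show "\<forall>\<^sub>F y in at x0 within {y. invertible y}. Z \<le> norm (matrix_inv y)"
    unfolding eventually_at using \<open>Z > 0\<close>
    by (intro exI[of _ "1 / Z"]) (auto intro: less_imp_le)
qed

lemma filterlim_norm_diff_bounded_at_top:
  fixes f g :: "'a \<Rightarrow> 'b::real_normed_vector"
  assumes "filterlim (\<lambda>x. norm (f x)) at_top F"
    and "\<forall>\<^sub>F x in F. norm (g x) \<le> B"
  shows "filterlim (\<lambda>x. norm (f x - g x)) at_top F"
proof (rule filterlim_at_top_mono)
  show "filterlim (\<lambda>x. - B + norm (f x)) at_top F"
    by (rule filterlim_tendsto_add_at_top[OF tendsto_const assms(1)])
  show "\<forall>\<^sub>F x in F. - B + norm (f x) \<le> norm (f x - g x)"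
  proof (rule eventually_mono[OF assms(2)])
    fix x
    assume "norm (g x) \<le> B"
    then show "- B + norm (f x) \<le> norm (f x - g x)"
      using norm_triangle_ineq2[of "f x" "g x"] by linarith
  qed
qed

lemma filterlim_powr_at_top:
  fixes f :: "'a \<Rightarrow> real"
  assumes "filterlim f at_top F" and "0 < k"
  shows "filterlim (\<lambda>x. f x powr k) at_top F"
  unfolding filterlim_at_top_gt[where c = 0]
proof (intro allI impI)
  fix Z :: real
  assume "Z > 0"
  from assms(1) have "\<forall>\<^sub>F x in F. Z powr (1 / k) \<le> f x"
    by (simp add: filterlim_at_top)
  then show "\<forall>\<^sub>F x in F. Z \<le> f x powr k"
  proof (rule eventually_mono)
    fix x
    assume "Z powr (1 / k) \<le> f x"
    then have "(Z powr (1 / k)) powr k \<le> f x powr k"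
      using \<open>0 < k\<close> by (intro powr_mono2) auto
    then show "Z \<le> f x powr k"
      using \<open>Z > 0\<close> \<open>0 < k\<close> by (simp add: powr_powr)
  qed
qed

lemma abs_poly2_le:
  assumes "\<bar>s\<bar> \<le> B" "\<bar>t\<bar> \<le> B"
  shows "\<bar>poly2 c d s t\<bar> \<le> poly2 (\<lambda>i j. \<bar>c i j\<bar>) d B B"
proof -
  have "\<bar>poly2 c d s t\<bar> \<le> (\<Sum>i\<le>d. \<Sum>j\<le>d. \<bar>c i j * s ^ i * t ^ j\<bar>)"
    unfolding poly2_def by (rule order_trans[OF sum_abs sum_mono[OF sum_abs]])
  also have "\<dots> \<le> (\<Sum>i\<le>d. \<Sum>j\<le>d. \<bar>c i j\<bar> * B ^ i * B ^ j)"
  proof (intro sum_mono)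
    fix i j
    have "\<bar>s\<bar> ^ i \<le> B ^ i" "\<bar>t\<bar> ^ j \<le> B ^ j"
      by (intro power_mono assms abs_ge_zero)+
    moreover have "0 \<le> B"
      using assms(1) by linarith
    ultimately show "\<bar>c i j * s ^ i * t ^ j\<bar> \<le> \<bar>c i j\<bar> * B ^ i * B ^ j"
      unfolding abs_mult power_abs mult.assoc by (intro mult_left_mono mult_mono) auto
  qed
  finally show ?thesis by (simp add: poly2_def)
qed

lemma poly_lipschitz_bounded_image:
  fixes F :: "real^'n^'m \<Rightarrow> real^'p^'q"
  assumes "poly_lipschitz Lp Ls F" and "bounded S"
  shows "bounded (F ` S)"
proof -
  obtain N c d where lip: "\<And>x y. vnorm Ls (F x - F y) \<le>
      (\<Sum>i\<le>N. poly2 (c i) d (vnorm Lp x) (vnorm Lp y) * vnorm Lp (x - y) ^ i)"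
    using assms(1) unfolding poly_lipschitz_def by blast
  obtain R where R: "0 < R" "\<And>x. x \<in> S \<Longrightarrow> norm x \<le> R"
    using assms(2) unfolding bounded_pos by blast
  define B where "B = real CARD('m) * real CARD('n) * R"
  have vnorm_le_B: "\<bar>vnorm Lp x\<bar> \<le> B" if "norm x \<le> R" for x :: "real^'n^'m"
  proof -
    have "vnorm Lp x \<le> real CARD('m) * real CARD('n) * norm x"
      by (rule vnorm_le_norm)
    also have "\<dots> \<le> B"
      using that by (simp add: B_def mult_left_mono)
    finally show ?thesis
      using vnorm_nonneg[of Lp x] by simp
  qed
  define G where "G = (\<Sum>i\<le>N. poly2 (\<lambda>a b. \<bar>c i a b\<bar>) d B B * B ^ i)"
  have "vnorm Ls (F x - F 0) \<le> G" if "x \<in> S" for x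
  proof -
    have x: "\<bar>vnorm Lp x\<bar> \<le> B"
      using R(2)[OF that] by (rule vnorm_le_B)
    have zero: "\<bar>vnorm Lp (0::real^'n^'m)\<bar> \<le> B"
      using R(1) by (intro vnorm_le_B) simp
    have "vnorm Ls (F x - F 0) \<le> (\<Sum>i\<le>N. poly2 (c i) d (vnorm Lp x) (vnorm Lp (0::real^'n^'m)) * vnorm Lp x ^ i)"
      using lip[of x 0] by simp
    also have "\<dots> \<le> G"
      unfolding G_def
    proof (rule sum_mono)
      fix i
      let ?p = "poly2 (c i) d (vnorm Lp x) (vnorm Lp (0::real^'n^'m))"
      have "?p * vnorm Lp x ^ i \<le> \<bar>?p\<bar> * \<bar>vnorm Lp x ^ i\<bar>"
        by (simp flip: abs_mult)
      also have "\<dots> \<le> poly2 (\<lambda>a b. \<bar>c i a b\<bar>) d B B * B ^ i"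
        using abs_poly2_le[OF x zero, of "c i" d] x
        by (intro mult_mono) (auto simp: power_abs power_mono)
      finally show "?p * vnorm Lp x ^ i \<le> poly2 (\<lambda>a b. \<bar>c i a b\<bar>) d B B * B ^ i" .
    qed
    finally show ?thesis .
  qed
  moreover have "norm (F x) \<le> norm (F 0) + real CARD('q) * real CARD('p) * G"
    if "vnorm Ls (F x - F 0) \<le> G" for x
  proof -
    have "real CARD('q) * real CARD('p) * vnorm Ls (F x - F 0) \<le> real CARD('q) * real CARD('p) * G"
      using that by (simp add: mult_left_mono)
    then show ?thesis
      using norm_triangle_sub[of "F x" "F 0"] norm_le_vnorm[of "F x - F 0" Ls] by linarith
  qed
  ultimately show ?thesis
    unfolding bounded_iff by blast
qed

lemma filterlim_vnorm_matrix_inv_minus_at_singular: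
  fixes F :: "real^'n^'n \<Rightarrow> real^'n^'n"
  assumes "det x0 = 0" and "poly_lipschitz Lp Ls F"
  shows "filterlim (\<lambda>y. vnorm L (matrix_inv y - F y)) at_top (at x0 within {y. invertible y})"
proof -
  obtain B where B: "\<And>y. y \<in> ball x0 1 \<Longrightarrow> norm (F y) \<le> B"
    using poly_lipschitz_bounded_image[OF assms(2) bounded_ball] unfolding bounded_iff by blast
  have "\<forall>\<^sub>F y in at x0 within {y. invertible y}. norm (F y) \<le> B"
    unfolding eventually_at by (rule exI[of _ 1]) (simp add: B dist_commute)
  with filterlim_norm_matrix_inv_at_singular[OF assms(1)] show ?thesis
    by (intro filterlim_vnorm_at_top) (rule filterlim_norm_diff_bounded_at_top)
qed

lemma det_affine_line_poly:
  fixes A D :: "real^'n^'n"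
  obtains P where "\<And>t. det (A + t *\<^sub>R D) = poly P t"
proof
  define P where "P = (\<Sum>p\<in>{p. p permutes (UNIV::'n set)}.
      smult (of_int (sign p)) (\<Prod>i\<in>UNIV. [:A $ i $ p i, D $ i $ p i:]))"
  show "det (A + t *\<^sub>R D) = poly P t" for t
    unfolding P_def det_def by (simp add: poly_sum poly_prod mult.commute)
qed

lemma invertible_near:
  fixes A :: "real^'n^'n"
  assumes "0 < e"
  obtains B where "invertible B" "dist B A < e"
proof -
  define D where "D = mat 1 - A"
  obtain P where P: "\<And>t. det (A + t *\<^sub>R D) = poly P t"
    using det_affine_line_poly by blast
  have "poly P 1 = 1"
    using P[of 1] by (simp add: D_def)
  then have "finite {t. poly P t = 0}"
    by (intro poly_roots_finite) auto
  have D1: "0 < norm D + 1"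
    using norm_ge_zero[of D] by linarith
  define t0 where "t0 = e / (norm D + 1)"
  have "0 < t0"
    using assms D1 by (simp add: t0_def)
  then have "infinite ({0<..<t0} - {t. poly P t = 0})"
    using \<open>finite {t. poly P t = 0}\<close> by (intro Diff_infinite_finite) auto
  then obtain t where "t \<in> {0<..<t0} - {t. poly P t = 0}"
    using infinite_imp_nonempty by blast
  then have t: "0 < t" "t < t0" "poly P t \<noteq> 0"
    by auto
  have "dist (A + t *\<^sub>R D) A = t * norm D"
    using t by (simp add: dist_norm)
  also have "\<dots> \<le> t * (norm D + 1)"
    using t by simp
  also have "\<dots> < t0 * (norm D + 1)"
    using t D1 by (intro mult_strict_right_mono)
  also have "\<dots> = e"
    using D1 by (simp add: t0_def)
  finally show thesis
    using t P[of t] by (intro that[of "A + t *\<^sub>R D"]) (auto simp: invertible_det_nz)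
qed

lemma open_invertible: "open {A::real^'n^'n. invertible A}"
proof -
  have "continuous_on UNIV (det :: real^'n^'n \<Rightarrow> real)"
    unfolding det_def by (intro continuous_intros)
  then show ?thesis
    unfolding invertible_det_nz by (rule open_Collect_neq[OF _ continuous_on_const])
qed

lemma open_contains_invertible_ball:
  fixes U :: "(real^'n^'n) set"
  assumes "open U" "U \<noteq> {}"
  obtains B r where "0 < r" "ball B r \<subseteq> U" "ball B r \<subseteq> {A. invertible A}"
proof -
  obtain A e where "0 < e" "ball A e \<subseteq> U"
    using assms open_contains_ball by blast
  moreover obtain B where "invertible B" "dist B A < e"
    using invertible_near[OF \<open>0 < e\<close>] by blast
  ultimately have "B \<in> U \<inter> {A. invertible A}"
    by (auto simp: dist_commute)
  moreover have "open (U \<inter> {A. invertible A})"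
    using assms(1) open_invertible by blast
  ultimately obtain r where "0 < r" "ball B r \<subseteq> U \<inter> {A. invertible A}"
    by (meson open_contains_ball)
  then show thesis
    by (intro that[of r B]) auto
qed

lemma eventually_at_invertible_imp_ball:
  fixes x0 :: "real^'n^'n"
  assumes "\<forall>\<^sub>F y in at x0 within {y. invertible y}. P y" and "0 < \<rho>"
  obtains r y where "0 < r" "ball y r \<subseteq> ball x0 \<rho>" "\<And>z. z \<in> ball y r \<Longrightarrow> invertible z \<and> P z"
proof -
  obtain \<delta> where "0 < \<delta>" and \<delta>: "\<And>z. invertible z \<Longrightarrow> z \<noteq> x0 \<Longrightarrow> dist z x0 < \<delta> \<Longrightarrow> P z"
    using assms(1) unfolding eventually_at by auto
  let ?U = "ball x0 (min \<rho> \<delta>) - {x0}"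
  have "open ?U"
    by (intro open_delete open_ball)
  moreover have "?U \<noteq> {}"
    using \<open>0 < \<rho>\<close> \<open>0 < \<delta>\<close> by (intro ball_minus_countable_nonempty) auto
  ultimately obtain y r where r: "0 < r" "ball y r \<subseteq> ?U" "ball y r \<subseteq> {A. invertible A}"
    by (rule open_contains_invertible_ball)
  show thesis
  proof (rule that)
    show "0 < r" "ball y r \<subseteq> ball x0 \<rho>"
      using r by auto
  next
    fix z
    assume "z \<in> ball y r"
    then have "z \<in> ?U" "invertible z"
      using r by blast+
    then show "invertible z \<and> P z"
      using \<delta> by (auto simp: dist_commute)
  qed
qed

lemma nn_integral_average_ge:
  assumes "A \<in> sets M" "0 < emeasure M A" "emeasure M A < \<infinity>"
    and "\<And>x. x \<in> A \<Longrightarrow> C \<le> f x"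
  shows "C \<le> (\<integral>\<^sup>+x\<in>A. f x \<partial>M) / emeasure M A"
proof -
  have "C * emeasure M A = (\<integral>\<^sup>+x\<in>A. C \<partial>M)"
    using assms(1) by (simp add: nn_integral_cmult_indicator)
  also have "\<dots> \<le> (\<integral>\<^sup>+x\<in>A. f x \<partial>M)"
    using assms(4) by (intro nn_integral_mono) (simp split: split_indicator)
  finally have "C * emeasure M A / emeasure M A \<le> (\<integral>\<^sup>+x\<in>A. f x \<partial>M) / emeasure M A"
    by (rule divide_right_mono_ennreal)
  then show ?thesis
    using assms(2,3) by (simp add: ennreal_mult_divide_eq)
qed

lemma emeasure_lebesgue_ball_pos_finite:
  fixes x :: "'a::euclidean_space"
  assumes "0 < r"
  shows "0 < emeasure lebesgue (ball x r)" "emeasure lebesgue (ball x r) < \<infinity>"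
  using assms emeasure_lborel_ball_finite[of x r]
  by (simp_all add: emeasure_completion emeasure_ball ennreal_less_zero_iff)

theorem theorem3p8:
  fixes L Lp Ls :: Lnorm
    and M :: "(real^'n^'n) set"
    and a :: "real^'n^'n"
    and c :: real
    and F :: "real^'n^'n \<Rightarrow> real^'n^'n"
  assumes ball_sub: "{x. vnorm L (x - a) < c} \<subseteq> M"
    and ball_rank: "\<exists>x. vnorm L (x - a) < c \<and> rank x = CARD('n) - 1"
    and F_pl: "poly_lipschitz Lp Ls F"
  shows "\<forall>k::real. k > 0 \<longrightarrow> (\<forall>E::real. E > 0 \<longrightarrow>
    (\<exists>Me. Me \<subseteq> M - {x\<in>M. det x = 0} \<and> Me \<in> sets lebesgue \<and>
          0 < emeasure lebesgue Me \<and> emeasure lebesgue Me < \<infinity> \<and>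
          (\<integral>\<^sup>+x\<in>Me. ennreal (vnorm L (matrix_inv x - F x) powr k) \<partial>lebesgue)
             / emeasure lebesgue Me > ennreal E))"
proof (intro allI impI)
  fix k E :: real
  assume "k > 0" "E > 0"
  obtain x0 where x0: "vnorm L (x0 - a) < c" "rank x0 = CARD('n) - 1"
    using ball_rank by blast
  then have "det x0 = 0"
    by (simp add: det_eq_0_rank)
  obtain \<rho> where "0 < \<rho>" "ball x0 \<rho> \<subseteq> {x. vnorm L (x - a) < c}"
    using open_contains_ball_eq[OF open_vnorm_ball, of x0 L a c] x0(1) by auto
  with ball_sub have "ball x0 \<rho> \<subseteq> M"
    by blast
  have "filterlim (\<lambda>y. vnorm L (matrix_inv y - F y) powr k) at_top (at x0 within {y. invertible y})"
    using filterlim_vnorm_matrix_inv_minus_at_singular[OF \<open>det x0 = 0\<close> F_pl] \<open>k > 0\<close> by (rule filterlim_powr_at_top)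
  then have ev: "\<forall>\<^sub>F y in at x0 within {y. invertible y}. E + 1 \<le> vnorm L (matrix_inv y - F y) powr k"
    by (simp add: filterlim_at_top)
  obtain r y where "0 < r" "ball y r \<subseteq> ball x0 \<rho>" and large:
    "\<And>z. z \<in> ball y r \<Longrightarrow> invertible z \<and> E + 1 \<le> vnorm L (matrix_inv z - F z) powr k"
    using eventually_at_invertible_imp_ball[OF ev \<open>0 < \<rho>\<close>] by blast
  have "ball y r \<subseteq> M - {x\<in>M. det x = 0}"
    using large \<open>ball y r \<subseteq> ball x0 \<rho>\<close> \<open>ball x0 \<rho> \<subseteq> M\<close> invertible_det_nz by blast
  moreover have "ennreal (E + 1) \<le> (\<integral>\<^sup>+x\<in>ball y r. ennreal (vnorm L (matrix_inv x - F x) powr k) \<partial>lebesgue)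
      / emeasure lebesgue (ball y r)"
    using emeasure_lebesgue_ball_pos_finite[OF \<open>0 < r\<close>] large
    by (intro nn_integral_average_ge ennreal_leI) auto
  moreover have "ennreal E < ennreal (E + 1)"
    using \<open>E > 0\<close> by (simp add: ennreal_lessI)
  ultimately show "\<exists>Me. Me \<subseteq> M - {x\<in>M. det x = 0} \<and> Me \<in> sets lebesgue \<and>
          0 < emeasure lebesgue Me \<and> emeasure lebesgue Me < \<infinity> \<and>
          (\<integral>\<^sup>+x\<in>Me. ennreal (vnorm L (matrix_inv x - F x) powr k) \<partial>lebesgue)
             / emeasure lebesgue Me > ennreal E"
    using emeasure_lebesgue_ball_pos_finite[OF \<open>0 < r\<close>] lmeasurable_ball[THEN fmeasurableD]
    by (intro exI[of _ "ball y r"]) (auto intro: order.strict_trans2)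
qed

end
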